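(* Let $p_1\in[0,1]$ and let $PG_n$ be the random pentagonal chain network described in the context. Then for every $n\geq 1$, $$\mathbb{E}\big(Gut(PG_{n})\big)=(72-24p_{1})n^{3}+(72p_{1}-12)n^{2}+(1-48p_{1})n-1.$$
   Context: Random chain network $PG_n$: $PG_1$ is a $5$-cycle (pentagon). For $n\ge 1$, $PG_{n+1}$ is obtained from $PG_n$ by adding a new pentagon $O_{n+1}$ with vertices $x_1,x_2,x_3,x_4,x_5$ in cyclic (clockwise) order and adding one edge joining $x_1$ to a vertex $u_n$ of $PG_n$. The vertex $u_1$ is any vertex of $PG_1$ (all are equivalent). For $n\ge 2$, $u_n$ is a vertex of the last pentagon $O_n$ (whose vertex $x_1$ is the one joined to $u_{n-1}$): with probability $p_1$ one takes $u_n\in\{x_2,x_5\}$ of $O_n$ (the two neighbours of $x_1$ in $O_n$), and with probability $p_2=1-p_1$ one takes $u_n\in\{x_3,x_4\}$ of $O_n$ (the two vertices at distance $2$ from $x_1$ in $O_n$); $p_1,p_2$ do not depend on the step. Thus $PG_n$ has $5n$ vertices. For a graph $G$, $d(v)$ denotes the degree of vertex $v$ and $d(u,v)$ the shortest-path distance. The Gutman index is $Gut(G)=\sum_{\{u,v\}\subseteq V_G} d(u)d(v)\,d(u,v)$, the sum over unordered pairs of distinct vertices. *)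

theory Defs
  imports "HOL-Probability.Probability_Mass_Function"
begin

text \<open>Vertices of PG_n: pairs (k, j), k < n the index of the pentagon (0-based: O_(k+1)),
  j < 5 the position in the pentagon in cyclic order; position 0 is x_1, positions 1..4
  are x_2..x_5.\<close>

definition pg_vertices :: "nat \<Rightarrow> (nat \<times> nat) set" where
  "pg_vertices n = {(k, j). k < n \<and> j < 5}"

text \<open>Position in pentagon k to which x_1 of pentagon k+1 is joined.
  For k = 0 this is u_1 (all vertices of PG_1 equivalent; we take position 0);
  for k \<ge> 1 it is the choice cs ! (k-1) \<in> {1,2,3,4}.\<close>

definition pg_target :: "nat list \<Rightarrow> nat \<Rightarrow> nat" where
  "pg_target cs k = (if k = 0 then 0 else cs ! (k - 1))"

definition pg_adj :: "nat \<Rightarrow> nat list \<Rightarrow> nat \<times> nat \<Rightarrow> nat \<times> nat \<Rightarrow> bool" where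
  "pg_adj n cs x y \<longleftrightarrow> x \<in> pg_vertices n \<and> y \<in> pg_vertices n \<and>
     ((fst x = fst y \<and> (snd y = (snd x + 1) mod 5 \<or> snd x = (snd y + 1) mod 5))
      \<or> (fst y = fst x + 1 \<and> snd y = 0 \<and> snd x = pg_target cs (fst x))
      \<or> (fst x = fst y + 1 \<and> snd x = 0 \<and> snd y = pg_target cs (fst y)))"

definition pg_degree :: "nat \<Rightarrow> nat list \<Rightarrow> nat \<times> nat \<Rightarrow> nat" where
  "pg_degree n cs v = card {w \<in> pg_vertices n. pg_adj n cs v w}"

definition pg_dist :: "nat \<Rightarrow> nat list \<Rightarrow> nat \<times> nat \<Rightarrow> nat \<times> nat \<Rightarrow> nat" where
  "pg_dist n cs u v = (LEAST k. (pg_adj n cs ^^ k) u v)"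

text \<open>Gutman index: sum over unordered pairs of distinct vertices = half of the sum over
  ordered pairs (diagonal terms vanish since d(u,u) = 0).\<close>
definition pg_gutman :: "nat \<Rightarrow> nat list \<Rightarrow> real" where
  "pg_gutman n cs = (\<Sum>u\<in>pg_vertices n. \<Sum>v\<in>pg_vertices n.
      real (pg_degree n cs u * pg_degree n cs v * pg_dist n cs u v)) / 2"

text \<open>One random choice of u_k (k \<ge> 2): with prob. p1 a neighbour of x_1 (positions 1 or 4),
  otherwise a vertex at distance 2 (positions 2 or 3); within each pair uniformly.\<close>
definition pg_choice_pmf :: "real \<Rightarrow> nat pmf" where
  "pg_choice_pmf p1 =
     bind_pmf (bernoulli_pmf p1) (\<lambda>b. map_pmf (\<lambda>s. if b then (if s then 1 else 4) else (if s then 2 else 3))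
       (bernoulli_pmf (1/2)))"

text \<open>Independent choices u_2, ..., u_(m+1).\<close>
fun pg_choices_pmf :: "real \<Rightarrow> nat \<Rightarrow> nat list pmf" where
  "pg_choices_pmf p1 0 = return_pmf []"
| "pg_choices_pmf p1 (Suc m) =
     bind_pmf (pg_choices_pmf p1 m) (\<lambda>cs. map_pmf (\<lambda>c. cs @ [c]) (pg_choice_pmf p1))"

end

theory Submission
  imports Defs
begin

(* The pentagons of PG_n form a path, so a shortest path from pentagon a to pentagon b > a
   runs to the exit vertex of a (the one carrying the bridge to a + 1), then through each
   intermediate pentagon k from its entry vertex x_1 to its exit vertex, which costs
   c_k + 1 with c_k the cycle distance from x_1 to u_k, and finally from the entry vertex
   of b to the target. Weighted by degrees, the Gutman index is therefore an affine
   function of the c_k. Each inner c_k is 1 with probability p1 and 2 otherwise, so by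
   linearity of expectation the c_k may be replaced by 2 - p1, and the resulting double
   sum over pairs of pentagons is a cubic polynomial in n. *)

lemma relpowp_sym:
  assumes "symp R" and "(R ^^ k) x y"
  shows "(R ^^ k) y x"
  using assms(2)
proof (induction k arbitrary: y)
  case 0
  then show ?case by simp
next
  case (Suc k)
  from \<open>(R ^^ Suc k) x y\<close> obtain w where "(R ^^ k) x w" "R w y"
    by (rule relpowp_Suc_E)
  with Suc.IH assms(1) show ?case by (metis relpowp_Suc_I2 sympD)
qed

lemma sum_lessThan_5: "(\<Sum>i<5. f i) = f 0 + f 1 + f 2 + f 3 + f (4::nat)"
  for f :: "nat \<Rightarrow> 'a::comm_monoid_add"
  by (simp add: eval_nat_numeral add.assoc)

lemma sum_symmetric_square:
  fixes f :: "nat \<Rightarrow> nat \<Rightarrow> 'a::comm_semiring_1"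
  assumes "\<And>a b. f a b = f b a"
  shows "(\<Sum>a<N. \<Sum>b<N. f a b) = (\<Sum>a<N. f a a) + 2 * (\<Sum>b<N. \<Sum>a<b. f a b)"
proof (induction N)
  case 0
  then show ?case by simp
next
  case (Suc N)
  have "(\<Sum>a<Suc N. \<Sum>b<Suc N. f a b) =
      (\<Sum>a<N. \<Sum>b<N. f a b) + (\<Sum>a<N. f a N) + (\<Sum>b<N. f N b) + f N N"
    by (simp add: sum.distrib add_ac)
  also have "(\<Sum>b<N. f N b) = (\<Sum>a<N. f a N)"
    using assms by simp
  finally show ?case
    using Suc by (simp add: algebra_simps mult_2)
qed

lemma sum_product_affine:
  fixes f g x y :: "'i \<Rightarrow> 'a::comm_semiring_1"
  shows "(\<Sum>i\<in>I. \<Sum>j\<in>J. f i * g j * (d + x i + y j)) =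
    d * sum f I * sum g J + sum g J * (\<Sum>i\<in>I. f i * x i) + sum f I * (\<Sum>j\<in>J. g j * y j)"
  by (simp add: sum.distrib sum_distrib_left sum_distrib_right algebra_simps sum.swap[of _ J])

section \<open>A single pentagon\<close>

definition cyc_dist :: "nat \<Rightarrow> nat \<Rightarrow> nat" where
  "cyc_dist i j = min ((i + 5 - j) mod 5) ((j + 5 - i) mod 5)"

lemma less_five_iff: "(i::nat) < 5 \<longleftrightarrow> i = 0 \<or> i = 1 \<or> i = 2 \<or> i = 3 \<or> i = 4"
  by auto

lemma cyc_dist_commute: "cyc_dist i j = cyc_dist j i"
  unfolding cyc_dist_def by (simp add: min.commute)

lemma cyc_dist_self [simp]: "cyc_dist i i = 0"
  unfolding cyc_dist_def by simp

lemma cyc_dist_adjacent_le: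
  assumes "i < 5" "j < 5" "z < 5" "j = (i + 1) mod 5 \<or> i = (j + 1) mod 5"
  shows "cyc_dist z j \<le> cyc_dist z i + 1"
  using assms unfolding cyc_dist_def less_five_iff by (elim disjE) simp_all

text \<open>Degrees in a pentagon whose entry vertex sits at position 0 and whose exit vertex at
  position t; the flags tell whether the bridges to the previous and next pentagon exist.\<close>

definition pent_deg :: "bool \<Rightarrow> bool \<Rightarrow> nat \<Rightarrow> nat \<Rightarrow> real" where
  "pent_deg entry exit t i = 2 + of_bool (entry \<and> i = 0) + of_bool (exit \<and> i = t)"

lemma sum_pent_deg:
  "(exit \<Longrightarrow> t < 5) \<Longrightarrow> (\<Sum>i<5. pent_deg entry exit t i) = 10 + of_bool entry + of_bool exit"
  by (cases entry; cases exit) (auto simp: sum_lessThan_5 pent_deg_def less_five_iff)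

lemma sum_pent_deg_dist_entry:
  "(exit \<Longrightarrow> t < 5) \<Longrightarrow>
    (\<Sum>i<5. pent_deg entry exit t i * cyc_dist 0 i) = 12 + of_bool exit * cyc_dist 0 t"
  by (cases entry; cases exit) (auto simp: sum_lessThan_5 pent_deg_def less_five_iff cyc_dist_def)

lemma sum_pent_deg_dist_exit:
  "t < 5 \<Longrightarrow> (\<Sum>i<5. pent_deg entry exit t i * cyc_dist i t) = 12 + of_bool entry * cyc_dist 0 t"
  by (cases entry; cases exit) (auto simp: sum_lessThan_5 pent_deg_def less_five_iff cyc_dist_def)

lemma pentagon_gutman:
  assumes "exit \<Longrightarrow> t < 5" and "entry \<Longrightarrow> exit \<Longrightarrow> t \<noteq> 0"
  shows "(\<Sum>i<5. \<Sum>j<5. pent_deg entry exit t i * pent_deg entry exit t j * cyc_dist i j) =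
    2 * (60 + 12 * of_bool entry + 12 * of_bool exit + of_bool (entry \<and> exit) * cyc_dist 0 t)"
  using assms
  by (cases entry; cases exit) (auto simp: sum_lessThan_5 pent_deg_def less_five_iff cyc_dist_def)

section \<open>Distances, degrees and the Gutman index of a pentagon chain\<close>

definition exit_offset :: "nat list \<Rightarrow> nat \<Rightarrow> nat" where
  "exit_offset cs k = cyc_dist 0 (pg_target cs k)"

definition pent_weight :: "nat \<Rightarrow> nat \<Rightarrow> real" where
  "pent_weight n a = 10 + of_bool (0 < a) + of_bool (a + 1 < n)"

definition chain_depth :: "(nat \<Rightarrow> real) \<Rightarrow> nat \<Rightarrow> real" where
  "chain_depth c b = (\<Sum>m<b. c m + 1)"

text \<open>The Gutman index of a chain of n pentagons in which pentagon k has entry-to-exit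
  distance c k. The first sum collects the pairs inside one pentagon. For a < b the pairs
  from pentagons a and b contribute the gap chain_depth c b - chain_depth c a - c a between
  the exit of a and the entry of b times both degree sums, plus the degree-weighted
  distances to the exit of a and from the entry of b, each of which equals 12 + c.\<close>

definition chain_gutman :: "nat \<Rightarrow> (nat \<Rightarrow> real) \<Rightarrow> real" where
  "chain_gutman n c =
    (\<Sum>a<n. 60 + 12 * of_bool (0 < a) + 12 * of_bool (a + 1 < n) + c a) +
    (\<Sum>b<n. \<Sum>a<b. pent_weight n a * pent_weight n b * (chain_depth c b - chain_depth c a - c a)
        + pent_weight n a * (12 + c b) + pent_weight n b * (12 + c a))"

text \<open>The last pentagon has no exit, and pg_target reads beyond cs there, so its offset is
  set to 0; the first one has offset 0 as its exit is x_1 itself.\<close>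

definition exit_offsets :: "nat \<Rightarrow> nat list \<Rightarrow> nat \<Rightarrow> real" where
  "exit_offsets n cs k = (if k + 1 < n then real (exit_offset cs k) else 0)"

locale pentagon_chain =
  fixes n :: nat and cs :: "nat list"
  assumes inner_target: "\<And>k. 0 < k \<Longrightarrow> k + 1 < n \<Longrightarrow> pg_target cs k \<in> {1, 2, 3, 4}"
begin

abbreviation adj :: "nat \<times> nat \<Rightarrow> nat \<times> nat \<Rightarrow> bool" where
  "adj \<equiv> pg_adj n cs"

abbreviation tgt :: "nat \<Rightarrow> nat" where
  "tgt \<equiv> pg_target cs"

lemma tgt_0 [simp]: "tgt 0 = 0"
  by (simp add: pg_target_def)

lemma tgt_less_5: "k + 1 < n \<Longrightarrow> tgt k < 5"
  using inner_target[of k] by (cases "k = 0") auto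

lemma mem_pg_vertices [simp]: "(a, i) \<in> pg_vertices n \<longleftrightarrow> a < n \<and> i < 5"
  by (simp add: pg_vertices_def)

lemma adj_iff:
  "adj (a, i) (b, j) \<longleftrightarrow> a < n \<and> i < 5 \<and> b < n \<and> j < 5 \<and>
     (a = b \<and> (j = (i + 1) mod 5 \<or> i = (j + 1) mod 5) \<or>
      b = a + 1 \<and> j = 0 \<and> i = tgt a \<or> a = b + 1 \<and> i = 0 \<and> j = tgt b)"
  unfolding pg_adj_def by auto

lemma symp_adj: "symp adj"
  unfolding pg_adj_def by (auto intro: sympI)

lemma walk_around_pentagon:
  assumes "a < n" "i < 5" "j < 5"
  shows "(adj ^^ cyc_dist i j) (a, i) (a, j)"
proof -
  have forward: "(adj ^^ m) (a, i) (a, (i + m) mod 5)" if "i < 5" for i m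
  proof (induction m)
    case 0
    with that show ?case by simp
  next
    case (Suc m)
    have "adj (a, (i + m) mod 5) (a, (i + Suc m) mod 5)"
      using \<open>a < n\<close> by (simp add: adj_iff mod_Suc_eq)
    with Suc.IH show ?case by (rule relpowp_Suc_I)
  qed
  show ?thesis
  proof (cases "(j + 5 - i) mod 5 \<le> (i + 5 - j) mod 5")
    case True
    then have "cyc_dist i j = (j + 5 - i) mod 5" "(i + (j + 5 - i) mod 5) mod 5 = j"
      using assms unfolding cyc_dist_def less_five_iff by auto
    with forward[OF \<open>i < 5\<close>] show ?thesis by metis
  next
    case False
    then have "cyc_dist i j = (i + 5 - j) mod 5" "(j + (i + 5 - j) mod 5) mod 5 = i"
      using assms unfolding cyc_dist_def less_five_iff by auto
    with forward[OF \<open>j < 5\<close>] show ?thesis by (metis relpowp_sym symp_adj)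
  qed
qed

definition entry_depth :: "nat \<Rightarrow> nat" where
  "entry_depth k = (\<Sum>m<k. exit_offset cs m + 1)"

lemma entry_depth_Suc [simp]: "entry_depth (Suc k) = entry_depth k + exit_offset cs k + 1"
  by (simp add: entry_depth_def)

text \<open>The shortest-path distance in closed form, entry_depth k being the distance from (0, 0)
  to the entry vertex (k, 0). It changes by at most 1 along every edge, which gives the lower
  bound, and an explicit walk realises it.\<close>

fun chain_dist :: "nat \<times> nat \<Rightarrow> nat \<times> nat \<Rightarrow> int" where
  "chain_dist (a, i) (b, j) =
    (if a = b then int (cyc_dist i j)
     else if a < b then int (entry_depth b + cyc_dist 0 j)
       - int (entry_depth a + exit_offset cs a) + int (cyc_dist i (tgt a))
     else int (entry_depth a + cyc_dist 0 i)
       - int (entry_depth b + exit_offset cs b) + int (cyc_dist j (tgt b)))"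

declare chain_dist.simps [simp del]

lemma chain_dist_commute: "chain_dist u v = chain_dist v u"
  by (cases u; cases v) (simp add: chain_dist.simps cyc_dist_commute)

lemma chain_dist_self [simp]: "chain_dist u u = 0"
  by (cases u) (simp add: chain_dist.simps)

lemma chain_dist_Suc:
  "a \<le> b \<Longrightarrow> chain_dist (a, i) (Suc b, j) = chain_dist (a, i) (b, tgt b) + 1 + cyc_dist 0 j"
  by (auto simp: chain_dist.simps exit_offset_def cyc_dist_commute)

lemma chain_dist_bridge:
  "\<bar>chain_dist u (Suc k, 0) - chain_dist u (k, tgt k)\<bar> = 1"
proof -
  obtain a i where u: "u = (a, i)" by (cases u)
  show ?thesis
  proof (cases "a \<le> k")
    case True
    then show ?thesis by (simp add: u chain_dist_Suc)
  next
    case False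
    then show ?thesis by (auto simp: u chain_dist.simps exit_offset_def cyc_dist_commute)
  qed
qed

lemma walk_of_chain_dist_mono:
  assumes "a \<le> b" "b < n" "i < 5" "j < 5"
  shows "\<exists>k. (adj ^^ k) (a, i) (b, j) \<and> int k = chain_dist (a, i) (b, j)"
  using assms
proof (induction b arbitrary: j rule: dec_induct)
  case base
  then show ?case
    using walk_around_pentagon by (auto simp: chain_dist.simps)
next
  case (step b)
  have "tgt b < 5" using step.prems tgt_less_5 by simp
  with step obtain k where k: "(adj ^^ k) (a, i) (b, tgt b)" "int k = chain_dist (a, i) (b, tgt b)"
    by fastforce
  have "adj (b, tgt b) (Suc b, 0)"
    using step.prems \<open>tgt b < 5\<close> by (simp add: adj_iff)
  with k(1) have "(adj ^^ Suc k) (a, i) (Suc b, 0)"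
    by (rule relpowp_Suc_I)
  moreover have "(adj ^^ cyc_dist 0 j) (Suc b, 0) (Suc b, j)"
    using walk_around_pentagon step.prems by simp
  ultimately have "(adj ^^ (Suc k + cyc_dist 0 j)) (a, i) (Suc b, j)"
    by (rule relpowp_trans)
  moreover have "int (Suc k + cyc_dist 0 j) = chain_dist (a, i) (Suc b, j)"
    using k(2) chain_dist_Suc[OF step.hyps(1)] by simp
  ultimately show ?case by blast
qed

lemma walk_of_chain_dist:
  assumes "u \<in> pg_vertices n" "v \<in> pg_vertices n"
  shows "\<exists>k. (adj ^^ k) u v \<and> int k = chain_dist u v"
proof -
  obtain a i b j where uv: "u = (a, i)" "v = (b, j)" by (cases u, cases v)
  show ?thesis
  proof (cases "a \<le> b")
    case True
    then show ?thesis using assms walk_of_chain_dist_mono by (simp add: uv)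
  next
    case False
    then obtain k where "(adj ^^ k) v u" "int k = chain_dist v u"
      using assms walk_of_chain_dist_mono[of b a j i] by (auto simp: uv)
    then show ?thesis by (metis chain_dist_commute relpowp_sym symp_adj)
  qed
qed

lemma chain_dist_adj_le:
  assumes "u \<in> pg_vertices n" "adj x y"
  shows "chain_dist u y \<le> chain_dist u x + 1"
proof -
  obtain a i where u: "u = (a, i)" by (cases u)
  obtain b j c l where xy: "x = (b, j)" "y = (c, l)" by (cases x, cases y)
  from assms(2) consider
      "b = c" "b < n" "j < 5" "l < 5" "l = (j + 1) mod 5 \<or> j = (l + 1) mod 5"
    | "c = Suc b" "l = 0" "j = tgt b"
    | "b = Suc c" "j = 0" "l = tgt c"
    unfolding xy adj_iff by auto
  then show ?thesis
  proof cases
    case 1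
    have cyc: "int (cyc_dist z l) \<le> int (cyc_dist z j) + 1 \<and>
        int (cyc_dist l z) \<le> int (cyc_dist j z) + 1" if "z < 5" for z
      using 1 cyc_dist_adjacent_le[of j l z] that by (simp add: cyc_dist_commute)
    have "tgt b < 5" if "b < a" using tgt_less_5 that assms(1) u by simp
    then show ?thesis
      using 1 assms(1) cyc[of i] cyc[of 0] cyc[of "tgt b"]
      by (auto simp: u xy chain_dist.simps)
  next
    case 2
    then show ?thesis using chain_dist_bridge[of u b] by (simp add: xy)
  next
    case 3
    then show ?thesis using chain_dist_bridge[of u c] by (simp add: xy)
  qed
qed

lemma chain_dist_le_walk:
  assumes "u \<in> pg_vertices n" "(adj ^^ k) u v"
  shows "chain_dist u v \<le> int k"
  using assms(2)
proof (induction k arbitrary: v)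
  case 0
  then show ?case by simp
next
  case (Suc k)
  from \<open>(adj ^^ Suc k) u v\<close> obtain w where "(adj ^^ k) u w" "adj w v"
    by (rule relpowp_Suc_E)
  with Suc.IH chain_dist_adj_le[OF assms(1)] show ?case by fastforce
qed

lemma pg_dist_eq_chain_dist:
  assumes "u \<in> pg_vertices n" "v \<in> pg_vertices n"
  shows "int (pg_dist n cs u v) = chain_dist u v"
proof -
  obtain k where k: "(adj ^^ k) u v" "int k = chain_dist u v"
    using walk_of_chain_dist[OF assms] by blast
  have "pg_dist n cs u v = k"
    unfolding pg_dist_def
  proof (rule Least_equality)
    show "(adj ^^ k) u v" by (fact k(1))
    show "k \<le> m" if "(adj ^^ m) u v" for m
      using chain_dist_le_walk[OF assms(1) that] k(2) by simp
  qed
  with k(2) show ?thesis by simp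
qed

abbreviation deg :: "nat \<Rightarrow> nat \<Rightarrow> real" where
  "deg a \<equiv> pent_deg (0 < a) (a + 1 < n) (tgt a)"

lemma pg_degree_eq:
  assumes "a < n" "i < 5"
  shows "real (pg_degree n cs (a, i)) = deg a i"
proof -
  have neighbours: "{w \<in> pg_vertices n. adj (a, i) w} =
      {(a, (i + 1) mod 5), (a, (i + 4) mod 5)}
      \<union> (if 0 < a \<and> i = 0 then {(a - 1, tgt (a - 1))} else {})
      \<union> (if a + 1 < n \<and> i = tgt a then {(a + 1, 0)} else {})" (is "_ = ?rhs")
  proof (rule set_eqI)
    fix w :: "nat \<times> nat"
    obtain b j where w: "w = (b, j)" by (cases w)
    have "tgt (a - 1) < 5" if "0 < a" using tgt_less_5[of "a - 1"] assms that by simp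
    moreover have "j < 5 \<Longrightarrow> (j = (i + 1) mod 5 \<or> i = (j + 1) mod 5) \<longleftrightarrow>
        (j = (i + 1) mod 5 \<or> j = (i + 4) mod 5)"
      using assms(2) unfolding less_five_iff by (elim disjE) auto
    ultimately show "w \<in> {w \<in> pg_vertices n. adj (a, i) w} \<longleftrightarrow> w \<in> ?rhs"
      using assms by (auto simp: w adj_iff)
  qed
  have "(i + 1) mod 5 \<noteq> (i + 4) mod 5"
    using assms(2) unfolding less_five_iff by (elim disjE) auto
  then show ?thesis
    unfolding pg_degree_def neighbours by (cases "a = 0") (auto simp: card_insert_if pent_deg_def)
qed

definition pair_sum :: "nat \<Rightarrow> nat \<Rightarrow> real" where
  "pair_sum a b = (\<Sum>i<5. \<Sum>j<5. deg a i * deg b j * of_int (chain_dist (a, i) (b, j)))"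

lemma pair_sum_commute: "pair_sum a b = pair_sum b a"
  unfolding pair_sum_def
  by (subst sum.swap) (simp add: chain_dist_commute[of "(a, _)"] mult.commute)

lemma pg_gutman_eq_pair_sums: "pg_gutman n cs = (\<Sum>a<n. \<Sum>b<n. pair_sum a b) / 2"
proof -
  have sum_vertices: "(\<Sum>u\<in>pg_vertices n. f u) = (\<Sum>a<n. \<Sum>i<5. f (a, i))"
    for f :: "nat \<times> nat \<Rightarrow> real"
  proof -
    have "pg_vertices n = {..<n} \<times> {..<5}"
      by (auto simp: pg_vertices_def)
    then show ?thesis by (simp add: sum.cartesian_product)
  qed
  have "pg_gutman n cs = (\<Sum>a<n. \<Sum>i<5. \<Sum>b<n. \<Sum>j<5.
      real (pg_degree n cs (a, i) * pg_degree n cs (b, j) * pg_dist n cs (a, i) (b, j))) / 2"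
    unfolding pg_gutman_def sum_vertices ..
  also have "\<dots> = (\<Sum>a<n. \<Sum>i<5. \<Sum>b<n. \<Sum>j<5.
      deg a i * deg b j * of_int (chain_dist (a, i) (b, j))) / 2"
  proof (intro arg_cong[where f = "\<lambda>x. x / 2"] sum.cong refl)
    fix a i b j
    assume "a \<in> {..<n}" "i \<in> {..<5::nat}" "b \<in> {..<n}" "j \<in> {..<5::nat}"
    then have "(a, i) \<in> pg_vertices n" "(b, j) \<in> pg_vertices n" by auto
    then have "of_int (chain_dist (a, i) (b, j)) = real (pg_dist n cs (a, i) (b, j))"
      by (simp flip: pg_dist_eq_chain_dist)
    with \<open>(a, i) \<in> pg_vertices n\<close> \<open>(b, j) \<in> pg_vertices n\<close>
    show "real (pg_degree n cs (a, i) * pg_degree n cs (b, j) * pg_dist n cs (a, i) (b, j)) =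
        deg a i * deg b j * of_int (chain_dist (a, i) (b, j))"
      by (simp add: pg_degree_eq)
  qed
  also have "\<dots> = (\<Sum>a<n. \<Sum>b<n. pair_sum a b) / 2"
    unfolding pair_sum_def by (intro arg_cong[where f = "\<lambda>x. x / 2"] sum.cong refl sum.swap)
  finally show ?thesis .
qed

lemma pair_sum_diagonal:
  assumes "a < n"
  shows "pair_sum a a =
    2 * (60 + 12 * of_bool (0 < a) + 12 * of_bool (a + 1 < n) + exit_offsets n cs a)"
proof -
  have "pair_sum a a = (\<Sum>i<5. \<Sum>j<5. deg a i * deg a j * cyc_dist i j)"
    by (simp add: pair_sum_def chain_dist.simps)
  also have "\<dots> = 2 * (60 + 12 * of_bool (0 < a) + 12 * of_bool (a + 1 < n)
      + of_bool (0 < a \<and> a + 1 < n) * cyc_dist 0 (tgt a))"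
    by (intro pentagon_gutman) (use tgt_less_5 inner_target[of a] in auto)
  also have "\<dots> = 2 * (60 + 12 * of_bool (0 < a) + 12 * of_bool (a + 1 < n) + exit_offsets n cs a)"
    by (cases "a = 0") (simp_all add: exit_offsets_def exit_offset_def)
  finally show ?thesis .
qed

lemma entry_depth_eq_chain_depth:
  "b < n \<Longrightarrow> real (entry_depth b) = chain_depth (exit_offsets n cs) b"
  unfolding entry_depth_def chain_depth_def exit_offsets_def by (simp add: of_nat_sum add.commute)

lemma pair_sum_less:
  assumes "a < b" "b < n"
  defines "c \<equiv> exit_offsets n cs"
  shows "pair_sum a b =
    pent_weight n a * pent_weight n b * (chain_depth c b - chain_depth c a - c a)
      + pent_weight n a * (12 + c b) + pent_weight n b * (12 + c a)"
proof -
  let ?gap = "chain_depth c b - chain_depth c a - c a"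
  have "pair_sum a b = (\<Sum>i<5. \<Sum>j<5. deg a i * deg b j *
      (?gap + cyc_dist i (tgt a) + cyc_dist 0 j))"
    unfolding pair_sum_def
    using assms entry_depth_eq_chain_depth[of a] entry_depth_eq_chain_depth[of b]
    by (intro sum.cong refl) (simp add: chain_dist.simps exit_offsets_def)
  also have "\<dots> = ?gap * sum (deg a) {..<5} * sum (deg b) {..<5}
      + sum (deg b) {..<5} * (\<Sum>i<5. deg a i * cyc_dist i (tgt a))
      + sum (deg a) {..<5} * (\<Sum>j<5. deg b j * cyc_dist 0 j)"
    by (rule sum_product_affine)
  also have "\<dots> = ?gap * pent_weight n a * pent_weight n b
      + pent_weight n b * (12 + c a) + pent_weight n a * (12 + c b)"
    using assms tgt_less_5[of a] tgt_less_5[of b]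
    by (cases "a = 0")
      (simp_all add: sum_pent_deg sum_pent_deg_dist_entry sum_pent_deg_dist_exit
        pent_weight_def exit_offsets_def exit_offset_def)
  finally show ?thesis by (simp add: algebra_simps)
qed

lemma pg_gutman_eq_chain_gutman: "pg_gutman n cs = chain_gutman n (exit_offsets n cs)"
proof -
  let ?c = "exit_offsets n cs"
  have "pg_gutman n cs = ((\<Sum>a<n. pair_sum a a) + 2 * (\<Sum>b<n. \<Sum>a<b. pair_sum a b)) / 2"
    unfolding pg_gutman_eq_pair_sums using pair_sum_commute by (subst sum_symmetric_square) auto
  also have "(\<Sum>a<n. pair_sum a a) =
      2 * (\<Sum>a<n. 60 + 12 * of_bool (0 < a) + 12 * of_bool (a + 1 < n) + ?c a)"
    by (simp add: pair_sum_diagonal sum_distrib_left)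
  also have "(\<Sum>b<n. \<Sum>a<b. pair_sum a b) = (\<Sum>b<n. \<Sum>a<b.
      pent_weight n a * pent_weight n b * (chain_depth ?c b - chain_depth ?c a - ?c a)
        + pent_weight n a * (12 + ?c b) + pent_weight n b * (12 + ?c a))"
    by (intro sum.cong refl) (simp add: pair_sum_less)
  finally show ?thesis
    unfolding chain_gutman_def by simp
qed

end

section \<open>The random chain\<close>

lemma set_pmf_pg_choice_pmf: "set_pmf (pg_choice_pmf p) \<subseteq> {1, 2, 3, 4}"
  unfolding pg_choice_pmf_def by (auto simp: set_bind_pmf)

lemma set_pmf_pg_choices_pmf:
  "cs \<in> set_pmf (pg_choices_pmf p m) \<Longrightarrow> length cs = m \<and> set cs \<subseteq> {1, 2, 3, 4}"
proof (induction m arbitrary: cs)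
  case 0
  then show ?case by simp
next
  case (Suc m)
  then obtain cs' c where "cs' \<in> set_pmf (pg_choices_pmf p m)" "c \<in> set_pmf (pg_choice_pmf p)"
      "cs = cs' @ [c]"
    by (auto simp: set_bind_pmf)
  with Suc.IH set_pmf_pg_choice_pmf show ?case by auto
qed

lemma finite_set_pmf_pg_choices_pmf: "finite (set_pmf (pg_choices_pmf p m))"
proof (rule finite_subset)
  show "set_pmf (pg_choices_pmf p m) \<subseteq> {cs. set cs \<subseteq> {1, 2, 3, 4} \<and> length cs = m}"
    using set_pmf_pg_choices_pmf by blast
  show "finite {cs. set cs \<subseteq> {1::nat, 2, 3, 4} \<and> length cs = m}"
    by (rule finite_lists_length_eq) simp
qed

lemma pentagon_chain_pg_choices_pmf:
  assumes "cs \<in> set_pmf (pg_choices_pmf p (n - 2))"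
  shows "pentagon_chain n cs"
proof
  fix k :: nat
  assume k: "0 < k" "k + 1 < n"
  have "length cs = n - 2" "set cs \<subseteq> {1, 2, 3, 4}"
    using set_pmf_pg_choices_pmf[OF assms] by auto
  with k have "cs ! (k - 1) \<in> set cs"
    by (intro nth_mem) simp
  with \<open>set cs \<subseteq> {1, 2, 3, 4}\<close> have "cs ! (k - 1) \<in> {1, 2, 3, 4}"
    by blast
  with k show "pg_target cs k \<in> {1, 2, 3, 4}"
    by (simp add: pg_target_def)
qed

lemma map_pmf_nth_pg_choices_pmf:
  "j < m \<Longrightarrow> map_pmf (\<lambda>cs. cs ! j) (pg_choices_pmf p m) = pg_choice_pmf p"
proof (induction m)
  case 0
  then show ?case by simp
next
  case (Suc m)
  let ?extend = "\<lambda>cs. map_pmf (\<lambda>c. (cs @ [c]) ! j) (pg_choice_pmf p)"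
  have "map_pmf (\<lambda>cs. cs ! j) (pg_choices_pmf p (Suc m)) = bind_pmf (pg_choices_pmf p m) ?extend"
    by (simp add: map_bind_pmf map_pmf_comp)
  also have "\<dots> = pg_choice_pmf p"
  proof (cases "j < m")
    case True
    then have "bind_pmf (pg_choices_pmf p m) ?extend =
        bind_pmf (pg_choices_pmf p m) (\<lambda>cs. return_pmf (cs ! j))"
      using set_pmf_pg_choices_pmf by (intro bind_pmf_cong) (auto simp: nth_append)
    with True Suc.IH show ?thesis
      by (simp add: map_pmf_def)
  next
    case False
    with Suc.prems have "j = m" by simp
    then have "bind_pmf (pg_choices_pmf p m) ?extend =
        bind_pmf (pg_choices_pmf p m) (\<lambda>cs. pg_choice_pmf p)"
      using set_pmf_pg_choices_pmf by (intro bind_pmf_cong) (auto simp: nth_append)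
    then show ?thesis by simp
  qed
  finally show ?case .
qed

lemma expectation_exit_dist_pg_choice_pmf:
  assumes "0 \<le> p" "p \<le> 1"
  shows "measure_pmf.expectation (pg_choice_pmf p) (\<lambda>x. real (cyc_dist 0 x)) = 2 - p"
  using assms unfolding pg_choice_pmf_def
  by (subst pmf_expectation_bind[where A = UNIV]) (auto simp: UNIV_bool cyc_dist_def field_simps)

definition expected_offset :: "nat \<Rightarrow> real \<Rightarrow> nat \<Rightarrow> real" where
  "expected_offset n p k = (if 0 < k \<and> k + 1 < n then 2 - p else 0)"

lemma expectation_exit_offsets:
  assumes "0 \<le> p" "p \<le> 1"
  shows "measure_pmf.expectation (pg_choices_pmf p (n - 2)) (\<lambda>cs. exit_offsets n cs k) =
    expected_offset n p k"
proof (cases "0 < k \<and> k + 1 < n")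
  case True
  then have "measure_pmf.expectation (pg_choices_pmf p (n - 2)) (\<lambda>cs. exit_offsets n cs k) =
      measure_pmf.expectation (map_pmf (\<lambda>cs. cs ! (k - 1)) (pg_choices_pmf p (n - 2)))
        (\<lambda>x. real (cyc_dist 0 x))"
    by (simp add: exit_offsets_def exit_offset_def pg_target_def)
  also have "map_pmf (\<lambda>cs. cs ! (k - 1)) (pg_choices_pmf p (n - 2)) = pg_choice_pmf p"
    using True by (intro map_pmf_nth_pg_choices_pmf) auto
  also have "measure_pmf.expectation (pg_choice_pmf p) (\<lambda>x. real (cyc_dist 0 x)) = 2 - p"
    using assms by (rule expectation_exit_dist_pg_choice_pmf)
  finally show ?thesis
    using True by (simp add: expected_offset_def)
next
  case False
  then have "exit_offsets n cs k = 0" for cs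
    by (auto simp: exit_offsets_def exit_offset_def pg_target_def)
  with False show ?thesis
    by (auto simp: expected_offset_def)
qed

lemma expectation_chain_gutman:
  fixes M :: "'a pmf" and X :: "'a \<Rightarrow> nat \<Rightarrow> real"
  assumes "finite (set_pmf M)"
  shows "measure_pmf.expectation M (\<lambda>x. chain_gutman n (X x)) =
    chain_gutman n (\<lambda>k. measure_pmf.expectation M (\<lambda>x. X x k))"
proof -
  have [simp]: "integrable (measure_pmf M) f" for f :: "'a \<Rightarrow> real"
    using integrable_measure_pmf_finite[OF assms] .
  show ?thesis
    unfolding chain_gutman_def chain_depth_def by (simp add: integral_sum integral_add integral_diff)
qed

section \<open>Evaluation at the expected offsets\<close>

lemma chain_depth_expected_offset:
  "b < n \<Longrightarrow> chain_depth (expected_offset n p) b = (if b = 0 then 0 else b * (3 - p) - (2 - p))"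
  by (induction b) (auto simp: chain_depth_def expected_offset_def algebra_simps)

lemma chain_depth_gap_expected_offset:
  fixes p :: real
  assumes "a < b" "b < n"
  defines "e \<equiv> expected_offset n p"
  shows "chain_depth e b - chain_depth e a - e a = (real b - real a) * (3 - p) - (2 - p)"
  using assms by (simp add: chain_depth_expected_offset expected_offset_def algebra_simps)

text \<open>Away from the last pentagon the degree sums are 11, 12, 12, ..., so a row needs only
  the moments 12 j + 11 and 6 j (j + 1) of the weights and the offset sum (2 - p) j.\<close>

lemma expected_row_sum:
  fixes p w x :: real
  assumes "j + 1 < n"
  defines "e \<equiv> expected_offset n p"
  shows "(\<Sum>a<Suc j. pent_weight n a * w * ((real b - real a) * (3 - p) - (2 - p))
      + pent_weight n a * (12 + x) + w * (12 + e a)) =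
    w * (3 - p) * (real b * (12 * j + 11) - 6 * j * (j + 1))
      + (12 + x - w * (2 - p)) * (12 * j + 11) + w * (12 * (j + 1) + (2 - p) * j)"
  using assms(1)
  by (induction j) (simp_all add: pent_weight_def e_def expected_offset_def algebra_simps)

lemma expected_rows_sum:
  fixes p :: real
  assumes "k + 1 < n"
  defines "e \<equiv> expected_offset n p"
  shows "(\<Sum>b<Suc k. \<Sum>a<b. pent_weight n a * pent_weight n b * ((real b - real a) * (3 - p) - (2 - p))
      + pent_weight n a * (12 + e b) + pent_weight n b * (12 + e a)) =
    (36 - 12 * p) * k * (k + 1) * (2 * k + 1) + (114 + 30 * p) * k * (k + 1) + (p - 14) * k"
  using assms(1)
proof (induction k)
  case 0
  then show ?case by simp
next
  case (Suc k)
  have weight: "pent_weight n (Suc k) = 12" and offset: "expected_offset n p (Suc k) = 2 - p"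
    using Suc.prems by (simp_all add: pent_weight_def e_def expected_offset_def)
  have row: "(\<Sum>a<Suc k. pent_weight n a * pent_weight n (Suc k)
        * ((real (Suc k) - real a) * (3 - p) - (2 - p))
        + pent_weight n a * (12 + e (Suc k)) + pent_weight n (Suc k) * (12 + e a)) =
      12 * (3 - p) * (real (Suc k) * (12 * k + 11) - 6 * k * (k + 1))
        + (12 + (2 - p) - 12 * (2 - p)) * (12 * k + 11) + 12 * (12 * (k + 1) + (2 - p) * k)"
    unfolding e_def weight offset
    using expected_row_sum[where j = k and n = n and p = p and w = 12 and x = "2 - p" and b = "Suc k"]
      Suc.prems
    by (simp add: algebra_simps)
  have "k + 1 < n"
    using Suc.prems by simp
  show ?case
    unfolding sum.lessThan_Suc[of _ "Suc k"] Suc.IH[OF \<open>k + 1 < n\<close>] row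
    by (simp add: algebra_simps)
qed

lemma chain_gutman_expected_offset:
  fixes p :: real
  assumes "1 \<le> n"
  shows "chain_gutman n (expected_offset n p) =
    (72 - 24 * p) * real n ^ 3 + (72 * p - 12) * real n ^ 2 + (1 - 48 * p) * real n - 1"
proof (cases "n = 1")
  case True
  then show ?thesis by (simp add: chain_gutman_def expected_offset_def)
next
  case False
  define k where "k = n - 2"
  with assms False have n: "n = Suc (Suc k)"
    by simp
  let ?e = "expected_offset n p"
  let ?w = "pent_weight n"
  let ?diag = "\<lambda>a. 60 + 12 * of_bool (0 < a) + 12 * of_bool (a + 1 < n) + ?e a"
  let ?pair = "\<lambda>a b. ?w a * ?w b * ((real b - real a) * (3 - p) - (2 - p))
      + ?w a * (12 + ?e b) + ?w b * (12 + ?e a)"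
  have last: "?w (Suc k) = 11" "?e (Suc k) = 0" "?diag (Suc k) = 72"
    by (simp_all add: n pent_weight_def expected_offset_def)
  have diagonal: "(\<Sum>a<Suc j. ?diag a) = 72 * (j + 1) + (14 - p) * j" if "j \<le> k" for j
    using that by (induction j) (auto simp: n expected_offset_def algebra_simps)
  have "k + 1 < n"
    by (simp add: n)
  have lessThan_n: "{..<n} = insert (Suc k) {..<Suc k}"
    by (auto simp: n)
  have "chain_gutman n ?e = (\<Sum>a<n. ?diag a) + (\<Sum>b<n. \<Sum>a<b. ?pair a b)"
    unfolding chain_gutman_def
    by (intro arg_cong2[where f = "(+)"] sum.cong refl) (simp add: chain_depth_gap_expected_offset)
  also have "\<dots> = (\<Sum>a<Suc k. ?diag a) + ?diag (Suc k)
      + (\<Sum>b<Suc k. \<Sum>a<b. ?pair a b) + (\<Sum>a<Suc k. ?pair a (Suc k))"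
    unfolding lessThan_n by (simp del: sum.lessThan_Suc add: add_ac)
  also have "\<dots> = (72 - 24 * p) * real n ^ 3 + (72 * p - 12) * real n ^ 2 + (1 - 48 * p) * real n - 1"
    unfolding last diagonal[OF order_refl] expected_rows_sum[where p = p, OF \<open>k + 1 < n\<close>]
      expected_row_sum[where p = p and w = 11 and x = 0 and b = "Suc k", OF \<open>k + 1 < n\<close>]
    by (simp add: n algebra_simps power2_eq_square power3_eq_cube)
  finally show ?thesis .
qed

theorem theorem2p1:
  fixes p1 :: real and n :: nat
  assumes "0 \<le> p1" and "p1 \<le> 1" and "n \<ge> 1"
  shows "measure_pmf.expectation (pg_choices_pmf p1 (n - 2)) (\<lambda>cs. pg_gutman n cs) =
    (72 - 24 * p1) * real n ^ 3 + (72 * p1 - 12) * real n ^ 2 + (1 - 48 * p1) * real n - 1"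
proof -
  let ?M = "pg_choices_pmf p1 (n - 2)"
  have "measure_pmf.expectation ?M (\<lambda>cs. pg_gutman n cs) =
      measure_pmf.expectation ?M (\<lambda>cs. chain_gutman n (exit_offsets n cs))"
    by (intro integral_cong_AE AE_pmfI)
      (auto simp: pentagon_chain.pg_gutman_eq_chain_gutman[OF pentagon_chain_pg_choices_pmf])
  also have "\<dots> = chain_gutman n (\<lambda>k. measure_pmf.expectation ?M (\<lambda>cs. exit_offsets n cs k))"
    by (rule expectation_chain_gutman[OF finite_set_pmf_pg_choices_pmf])
  also have "(\<lambda>k. measure_pmf.expectation ?M (\<lambda>cs. exit_offsets n cs k)) = expected_offset n p1"
    using assms by (simp add: expectation_exit_offsets)
  also have "chain_gutman n (expected_offset n p1) =
      (72 - 24 * p1) * real n ^ 3 + (72 * p1 - 12) * real n ^ 2 + (1 - 48 * p1) * real n - 1"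
    using assms(3) by (rule chain_gutman_expected_offset)
  finally show ?thesis .
qed

end
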